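(* Let $a_j$ ($j\ge2$) be formal variables and $f(x)=1+\sum_{j\ge2}a_jx^j\in\mathbb C[[x]]$. Then for every $n\ge1$, $$\frac{[x^{n+2}]f^{n+1}}{n+1}=\frac12\sum_{j=1}^{n-1}\frac{[x^{j+1}]f^{j}}{j}\cdot\frac{[x^{n-j+1}]f^{n-j}}{n-j}+\frac{[x^{n+2}]f^{n}}{n},$$ where $[x^N]g$ denotes the coefficient of $x^N$ in $g$. *)

theory Defs
  imports Complex_Main "HOL-Computational_Algebra.Formal_Power_Series"
begin

end

theory Submission
  imports Defs
begin

(* Put u = X/f. For every series Q one has [X^m] Q = [X^m] (Q oo u) f^(m+1) u', because
   [X^m] u^k f^(m+1) u' is 1 for k = m and 0 for k < m (Lagrange inversion). Applied to the
   series q with q oo u = 1/f and to q^2, it gives [X^(j+1)] q = - [X^(j+1)] f^j / j and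
   [X^(n+2)] q^2 = - 2 [X^(n+2)] f^n / n. Since f has no linear term, q = 1 + q_2 X^2 + ...,
   and comparing coefficients of X^(n+2) in q * q yields the identity. *)

unbundle fps_syntax

lemma fps_inverse_power_mult_power:
  fixes f :: "'a::field fps"
  assumes "f $ 0 \<noteq> 0"
  shows "inverse f ^ r * f ^ (s + r) = f ^ s"
proof -
  have "inverse f ^ r * f ^ r = 1"
    using inverse_mult_eq_1'[OF assms] by (simp add: power_mult_distrib[symmetric] mult.commute)
  then show ?thesis by (simp add: power_add algebra_simps)
qed

lemma fps_power_mult_deriv_X_inverse:
  fixes f :: "'a::field fps"
  assumes "f $ 0 \<noteq> 0" "p \<ge> 1"
  shows "f ^ (p + 1) * fps_deriv (fps_X * inverse f) = f ^ p - fps_X * (fps_deriv f * f ^ (p - 1))"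
proof -
  have "f ^ (p + 1) * inverse f = f ^ p"
    using fps_inverse_power_mult_power[OF assms(1), of 1 p] by (simp add: mult.commute)
  moreover have "f ^ (p + 1) * (inverse f)\<^sup>2 = f ^ (p - 1)"
    using fps_inverse_power_mult_power[OF assms(1), of 2 "p - 1"] assms(2) by (simp add: mult.commute)
  ultimately show ?thesis
    using assms(1) by (simp add: fps_inverse_deriv algebra_simps)
qed

lemma fps_nth_power_mult_deriv_X_inverse:
  fixes f :: "'a::field_char_0 fps"
  assumes "f $ 0 \<noteq> 0" "p \<ge> 1"
  shows "(f ^ (p + 1) * fps_deriv (fps_X * inverse f)) $ m
           = (of_nat p - of_nat m) / of_nat p * f ^ p $ m"
proof (cases m)
  case 0
  then show ?thesis using assms by (simp add: fps_power_mult_deriv_X_inverse[OF assms])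
next
  case (Suc m')
  have "of_nat m * f ^ p $ m = fps_deriv (f ^ p) $ m'" using Suc by simp
  also have "\<dots> = of_nat p * (fps_deriv f * f ^ (p - 1)) $ m'"
    unfolding fps_deriv_power' by (simp add: mult.assoc fps_of_nat[symmetric])
  finally have "(fps_deriv f * f ^ (p - 1)) $ m' = of_nat m / of_nat p * f ^ p $ m"
    using assms(2) by (simp add: field_simps)
  then show ?thesis
    unfolding fps_power_mult_deriv_X_inverse[OF assms] fps_sub_nth fps_X_mult_nth
    using Suc assms(2) by (simp add: field_simps)
qed

lemma fps_nth_X_inverse_power_mult_kernel:
  fixes f :: "'a::field_char_0 fps"
  assumes "f $ 0 \<noteq> 0" "k \<le> m"
  shows "((fps_X * inverse f) ^ k * (f ^ (m + 1) * fps_deriv (fps_X * inverse f))) $ m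
           = (if k = m then 1 else 0)"
proof -
  define D where "D = fps_deriv (fps_X * inverse f)"
  have "((fps_X * inverse f) ^ k * (f ^ (m + 1) * D)) $ m
          = (fps_X ^ k * (inverse f ^ k * f ^ (m + 1) * D)) $ m"
    by (simp only: power_mult_distrib mult.assoc)
  also have "inverse f ^ k * f ^ (m + 1) = f ^ (m - k + 1)"
    using fps_inverse_power_mult_power[OF assms(1), of k "m - k + 1"] assms(2) by simp
  also have "(fps_X ^ k * (f ^ (m - k + 1) * D)) $ m = (f ^ (m - k + 1) * D) $ (m - k)"
    using assms(2) by (simp add: fps_X_power_mult_nth)
  finally have nth: "((fps_X * inverse f) ^ k * (f ^ (m + 1) * D)) $ m = (f ^ (m - k + 1) * D) $ (m - k)" .
  show ?thesis
  proof (cases "k = m")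
    case True
    then show ?thesis using nth assms(1) by (simp add: D_def)
  next
    case False
    then show ?thesis
      using nth fps_nth_power_mult_deriv_X_inverse[OF assms(1), of "m - k" "m - k"] assms(2)
      by (simp add: D_def)
  qed
qed

lemma fps_nth_eq_compose_X_inverse_mult:
  fixes f Q :: "'a::field_char_0 fps"
  assumes "f $ 0 \<noteq> 0"
  shows "Q $ m = ((Q oo (fps_X * inverse f)) * (f ^ (m + 1) * fps_deriv (fps_X * inverse f))) $ m"
proof -
  define u where "u = fps_X * inverse f"
  define G where "G = f ^ (m + 1) * fps_deriv u"
  define T where "T = (\<Sum>k = 0..m. fps_const (Q $ k) * u ^ k)"
  have u0: "u $ 0 = 0" unfolding u_def by simp
  have kernel: "(u ^ k * G) $ m = (if k = m then 1 else 0)" if "k \<le> m" for k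
    unfolding u_def G_def by (rule fps_nth_X_inverse_power_mult_kernel[OF assms that])
  have "(Q oo u) $ i = T $ i" if "i \<le> m" for i
  proof -
    have "(Q oo u) $ i = (\<Sum>k = 0..i. Q $ k * (u ^ k) $ i)" by (rule fps_compose_nth)
    also have "\<dots> = (\<Sum>k = 0..m. Q $ k * (u ^ k) $ i)"
      by (rule sum.mono_neutral_left) (use that startsby_zero_power_prefix[OF u0] in auto)
    also have "\<dots> = T $ i" unfolding T_def fps_sum_nth by simp
    finally show ?thesis .
  qed
  then have "((Q oo u) * G) $ m = (T * G) $ m"
    unfolding fps_mult_nth by (intro sum.cong) auto
  also have "\<dots> = (\<Sum>k = 0..m. Q $ k * (u ^ k * G) $ m)"
    unfolding T_def sum_distrib_right fps_sum_nth by (simp add: mult.assoc)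
  also have "\<dots> = (\<Sum>k = 0..m. if k = m then Q $ k else 0)"
    by (intro sum.cong) (simp_all add: kernel)
  also have "\<dots> = Q $ m" by simp
  finally show ?thesis unfolding u_def G_def by simp
qed

lemma fps_nth_Lagrange_inverse_power:
  fixes f Q :: "'a::field_char_0 fps"
  assumes "f $ 0 \<noteq> 0" "Q oo (fps_X * inverse f) = inverse f ^ r" "r < m"
  shows "Q $ m = - of_nat r / of_nat (m - r) * f ^ (m - r) $ m"
proof -
  have "Q $ m = (inverse f ^ r * f ^ (m + 1) * fps_deriv (fps_X * inverse f)) $ m"
    using fps_nth_eq_compose_X_inverse_mult[OF assms(1), of Q m] assms(2) by (simp add: mult.assoc)
  also have "inverse f ^ r * f ^ (m + 1) = f ^ (m - r + 1)"
    using fps_inverse_power_mult_power[OF assms(1), of r "m - r + 1"] assms(3) by simp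
  also have "(f ^ (m - r + 1) * fps_deriv (fps_X * inverse f)) $ m
               = (of_nat (m - r) - of_nat m) / of_nat (m - r) * f ^ (m - r) $ m"
    using assms(3) by (intro fps_nth_power_mult_deriv_X_inverse[OF assms(1)]) simp
  finally show ?thesis using assms(3) by simp
qed

lemma fps_power2_nth_add_2:
  fixes q :: "'a::comm_ring_1 fps"
  assumes "q $ 0 = 1" "q $ 1 = 0" "n \<ge> 1"
  shows "(q\<^sup>2) $ (n + 2) = 2 * q $ (n + 2) + (\<Sum>j = 1..n - 1. q $ (j + 1) * q $ (n - j + 1))"
proof -
  define F where "F i = q $ i * q $ (n + 2 - i)" for i
  have "(q\<^sup>2) $ (n + 2) = (\<Sum>i = 0..n + 2. F i)"
    unfolding F_def power2_eq_square fps_mult_nth ..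
  also have "\<dots> = F 0 + F 1 + (\<Sum>i = 2..n. F i) + F (n + 1) + F (n + 2)"
    using assms(3) by (simp add: sum.atLeast_Suc_atMost numeral_2_eq_2 add_ac)
  also have "(\<Sum>i = 2..n. F i) = (\<Sum>j = 1..n - 1. F (j + 1))"
    using assms(3) sum.shift_bounds_cl_Suc_ivl[of F 1 "n - 1"] by (simp add: numeral_2_eq_2)
  also have "\<dots> = (\<Sum>j = 1..n - 1. q $ (j + 1) * q $ (n - j + 1))"
    unfolding F_def by (intro sum.cong) (auto simp: Suc_diff_le)
  finally show ?thesis
    using assms(1,2) by (simp add: F_def)
qed

lemma fps_ginv_inverse_X_inverse_nth:
  fixes f :: "'a::field_char_0 fps"
  assumes f0: "f $ 0 = 1" and f1: "f $ 1 = 0"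
  defines "q \<equiv> fps_ginv (inverse f) (fps_X * inverse f)"
  shows "q $ 0 = 1" and "q $ 1 = 0"
    and "j \<ge> 1 \<Longrightarrow> q $ (j + 1) = - (f ^ j $ (j + 1) / of_nat j)"
    and "n \<ge> 1 \<Longrightarrow> (q\<^sup>2) $ (n + 2) = - 2 * (f ^ n $ (n + 2) / of_nat n)"
proof -
  define u where "u = fps_X * inverse f"
  have u0: "u $ 0 = 0" and u1: "u $ 1 = 1" unfolding u_def using f0 by simp_all
  have q: "q oo u = inverse f" unfolding q_def u_def using fps_ginv[OF u0] u1 by (simp add: u_def)
  show "q $ 0 = 1" using arg_cong[OF q, of "\<lambda>g. g $ 0"] f0 by simp
  show "q $ 1 = 0" using arg_cong[OF q, of "\<lambda>g. g $ 1"] u0 u1 f0 f1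
    by (simp add: fps_compose_nth fps_inverse_def)
  show "q $ (j + 1) = - (f ^ j $ (j + 1) / of_nat j)" if "j \<ge> 1"
    using fps_nth_Lagrange_inverse_power[of f q 1 "j + 1"] f0 q that by (simp add: u_def)
  show "(q\<^sup>2) $ (n + 2) = - 2 * (f ^ n $ (n + 2) / of_nat n)" if "n \<ge> 1"
    using fps_nth_Lagrange_inverse_power[of f "q\<^sup>2" 2 "n + 2"] fps_compose_power[OF u0, of q 2]
      f0 q that
    by (simp add: u_def)
qed

theorem proposition3p6:
  fixes f :: "complex fps" and n :: nat
  assumes "fps_nth f 0 = 1" and "fps_nth f 1 = 0" and "n \<ge> 1"
  shows "fps_nth (f ^ (n + 1)) (n + 2) / of_nat (n + 1) =
           1 / 2 * (\<Sum>j = 1..n - 1. (fps_nth (f ^ j) (j + 1) / of_nat j) *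
                                      (fps_nth (f ^ (n - j)) (n - j + 1) / of_nat (n - j)))
           + fps_nth (f ^ n) (n + 2) / of_nat n"
proof -
  define q where "q = fps_ginv (inverse f) (fps_X * inverse f)"
  note q_nth = fps_ginv_inverse_X_inverse_nth[OF assms(1,2), folded q_def]
  have "(\<Sum>j = 1..n - 1. q $ (j + 1) * q $ (n - j + 1))
      = (\<Sum>j = 1..n - 1. (f ^ j $ (j + 1) / of_nat j) * (f ^ (n - j) $ (n - j + 1) / of_nat (n - j)))"
  proof (intro sum.cong refl)
    fix j assume "j \<in> {1..n - 1}"
    then have "j \<ge> 1" "n - j \<ge> 1" by auto
    then show "q $ (j + 1) * q $ (n - j + 1)
        = (f ^ j $ (j + 1) / of_nat j) * (f ^ (n - j) $ (n - j + 1) / of_nat (n - j))"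
      unfolding q_nth(3)[OF \<open>j \<ge> 1\<close>] q_nth(3)[OF \<open>n - j \<ge> 1\<close>] by simp
  qed
  moreover have "q $ (n + 2) = - (f ^ (n + 1) $ (n + 2) / of_nat (n + 1))"
    using q_nth(3)[of "n + 1"] by simp
  ultimately have "- 2 * (f ^ n $ (n + 2) / of_nat n)
      = 2 * - (f ^ (n + 1) $ (n + 2) / of_nat (n + 1))
        + (\<Sum>j = 1..n - 1. (f ^ j $ (j + 1) / of_nat j) * (f ^ (n - j) $ (n - j + 1) / of_nat (n - j)))"
    using fps_power2_nth_add_2[OF q_nth(1,2) assms(3)] q_nth(4)[OF assms(3)] by simp
  then show ?thesis by (simp add: field_simps)
qed

end
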